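(* Let $r\ge1$ and let $\Psi(x,\hbar):=\sum_{j\ge0}s_{(j)}(\tilde{\mathbf t}/\hbar)\,x^j\prod_{l=1}^j\frac{1}{1-\hbar(l-1)}$ with $\tilde t_k=\delta_{k,r}/r$ (the wave function of monotone $r$-orbifold Hurwitz numbers). Then $$\hat x\Big(\hat x^{r-1}+\prod_{j=1}^r\big(1+\hat x\hat y+\hbar(j-1)\big)\hat y\Big)\Psi(x,\hbar)=0,\qquad\hat x=x\cdot,\ \hat y=-\hbar\frac{\partial}{\partial x}.$$ In particular for $r=1$: $\hat x(\hat x\hat y^2+\hat y+1)\Psi=0$.
   Context: $s_{(j)}$ is defined by $\exp(\sum_{m\ge1}t_mx^m)=\sum_{j\ge0}s_{(j)}(\mathbf t)x^j$, and $\tilde{\mathbf t}/\hbar=(\tilde t_1/\hbar,\tilde t_2/\hbar,\dots)$; with $\tilde t_k=\delta_{k,r}/r$ this gives $s_{(j)}=0$ unless $r\mid j$ and $s_{(rn)}=1/(n!\,r^n\hbar^n)$. $\Psi$ is a formal power series in $x$ with coefficients formal in $\hbar$. *)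

theory Defs
  imports "HOL-Computational_Algebra.Formal_Power_Series" "HOL-Computational_Algebra.Formal_Laurent_Series"
begin

abbreviation hbar :: "real fls" where "hbar \<equiv> fls_X"

definition schur_row :: "(nat \<Rightarrow> 'a::field) \<Rightarrow> nat \<Rightarrow> 'a" where
  "schur_row t j = fps_nth (fps_compose (fps_exp 1) (Abs_fps (\<lambda>m. if m = 0 then 0 else t m))) j"

definition ttilde :: "nat \<Rightarrow> nat \<Rightarrow> real fls" where
  "ttilde r k = (if k = r then 1 / of_nat r else 0)"

definition Psi :: "nat \<Rightarrow> real fls fps" where
  "Psi r = Abs_fps (\<lambda>j. schur_row (\<lambda>k. ttilde r k / hbar) j *
       (\<Prod>l\<in>{1..j}. 1 / (1 - hbar * of_nat (l - 1))))"

definition opX :: "real fls fps \<Rightarrow> real fls fps" where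
  "opX f = fps_X * f"

definition opY :: "real fls fps \<Rightarrow> real fls fps" where
  "opY f = - fps_const hbar * fps_deriv f"

definition opFactor :: "nat \<Rightarrow> real fls fps \<Rightarrow> real fls fps" where
  "opFactor j f = f + opX (opY f) + fps_const (hbar * of_nat (j - 1)) * f"

definition opProd :: "nat \<Rightarrow> real fls fps \<Rightarrow> real fls fps" where
  "opProd r = foldr (\<circ>) (map opFactor [1..<r+1]) id"

end

theory Submission
  imports Defs
begin

text \<open>Write the x^j-coefficient of Psi as s(j) w(j), where w(j) = prod_{l=1..j} 1/(1 - hbar (l-1))
  and sum_j s(j) x^j = exp (x^r / (r hbar)). Differentiating the exponential gives
  (k+1) s(k+1) = s(k+1-r) / hbar, so the x^k-coefficient of y Psi is -s(k+1-r) w(k+1).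
  The factor 1 + x y + hbar (j-1) acts on x^k as the scalar 1 - hbar (k+1-j), and the product
  of these scalars over j = 1..r cancels the last r factors of w(k+1). What remains is
  -s(k+1-r) w(k+1-r), the x^k-coefficient of -x^(r-1) Psi.\<close>

(* keeps division by hbar from being rewritten into fls_shift *)
declare fls_divide_X [simp del]

lemma fps_exp_compose_monomial_nth_Suc:
  fixes c :: "'a::field_char_0"
  assumes "r \<ge> 1"
  shows "of_nat (Suc n) * (fps_exp 1 oo fps_const c * fps_X ^ r) $ Suc n =
    (if n < r - 1 then 0 else of_nat r * c * (fps_exp 1 oo fps_const c * fps_X ^ r) $ (Suc n - r))"
proof -
  define E where "E = fps_exp 1 oo fps_const c * fps_X ^ r"
  have "fps_deriv E = fps_const (of_nat r * c) * (E * fps_X ^ (r - 1))"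
    using fps_compose_deriv[of "fps_const c * fps_X ^ r" "fps_exp 1"] assms
    by (simp add: E_def fps_deriv_power fps_const_mult[symmetric] mult_ac del: fps_const_mult)
  then have "fps_deriv E $ n = of_nat r * c * (E * fps_X ^ (r - 1)) $ n"
    by simp
  moreover have "n - (r - 1) = Suc n - r" using assms by arith
  ultimately show ?thesis
    by (simp add: E_def fps_X_power_mult_right_nth)
qed

lemma schur_row_ttilde:
  assumes "r \<ge> 1"
  shows "schur_row (\<lambda>k. ttilde r k / hbar) =
    fps_nth (fps_exp 1 oo fps_const (1 / (of_nat r * hbar)) * fps_X ^ r)"
proof -
  have "Abs_fps (\<lambda>m. if m = 0 then 0 else ttilde r m / hbar) = fps_const (1 / (of_nat r * hbar)) * fps_X ^ r"
    using assms by (intro fps_ext) (simp add: ttilde_def fps_X_power_mult_right_nth divide_divide_eq_left)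
  then show ?thesis
    by (simp add: schur_row_def fun_eq_iff)
qed

lemma schur_row_ttilde_nth_Suc:
  assumes "r \<ge> 1"
  shows "of_nat (Suc n) * schur_row (\<lambda>k. ttilde r k / hbar) (Suc n) =
    (if n < r - 1 then 0 else schur_row (\<lambda>k. ttilde r k / hbar) (Suc n - r) / hbar)"
  using fps_exp_compose_monomial_nth_Suc[OF assms, of n "1 / (of_nat r * hbar)"] assms
  by (simp add: schur_row_ttilde)

lemma one_minus_hbar_nonzero: "1 - hbar * of_nat c \<noteq> 0"
proof
  assume "1 - hbar * of_nat c = 0"
  then have "fls_nth (1 - hbar * of_nat c) 0 = 0" by simp
  then show False by simp
qed

definition monotone_weight :: "nat \<Rightarrow> real fls" where
  "monotone_weight j = (\<Prod>l\<in>{1..j}. 1 / (1 - hbar * of_nat (l - 1)))"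

lemma monotone_weight_Suc: "monotone_weight (Suc n) = monotone_weight n / (1 - hbar * of_nat n)"
  by (simp add: monotone_weight_def)

lemma monotone_weight_mult_prod:
  assumes "i \<le> n"
  shows "monotone_weight n * (\<Prod>j=1..i. 1 - hbar * of_nat (n - j)) = monotone_weight (n - i)"
  using assms
proof (induction i)
  case 0
  then show ?case by simp
next
  case (Suc i)
  define m where "m = n - Suc i"
  have "n - i = Suc m" using Suc.prems by (simp add: m_def)
  then have "monotone_weight (n - i) * (1 - hbar * of_nat m) = monotone_weight m"
    using one_minus_hbar_nonzero[of m] by (simp add: monotone_weight_Suc)
  with Suc show ?case by (simp add: mult.assoc[symmetric] m_def)
qed

lemma Psi_nth: "Psi r $ j = schur_row (\<lambda>k. ttilde r k / hbar) j * monotone_weight j"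
  by (simp add: Psi_def monotone_weight_def)

lemma opX_power: "(opX ^^ n) f = fps_X ^ n * f"
  by (induction n) (simp_all add: opX_def)

lemma opFactor_nth: "opFactor j f $ k = (1 - hbar * of_nat k + hbar * of_nat (j - 1)) * f $ k"
  by (cases k) (simp_all add: opFactor_def opX_def opY_def fps_X_mult_nth algebra_simps)

lemma opProd_nth: "opProd r f $ k = (\<Prod>j=1..r. 1 - hbar * of_nat k + hbar * of_nat (j - 1)) * f $ k"
proof -
  have "foldr (\<circ>) (map opFactor js) id f $ k =
      prod_list (map (\<lambda>j. 1 - hbar * of_nat k + hbar * of_nat (j - 1)) js) * f $ k" for js
    by (induction js) (simp_all add: opFactor_nth)
  moreover have "set [1..<r+1] = {1..r}" by auto
  ultimately show ?thesis
    unfolding opProd_def by (simp only: prod.distinct_set_conv_list[symmetric] distinct_upt)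
qed

lemma opY_nth: "opY f $ k = - hbar * of_nat (Suc k) * f $ Suc k"
  by (simp add: opY_def)

lemma opY_Psi_nth:
  assumes "r \<ge> 1"
  shows "opY (Psi r) $ k =
    (if k < r - 1 then 0 else - schur_row (\<lambda>k. ttilde r k / hbar) (Suc k - r) * monotone_weight (Suc k))"
proof -
  have "opY (Psi r) $ k =
      - hbar * (of_nat (Suc k) * schur_row (\<lambda>k. ttilde r k / hbar) (Suc k)) * monotone_weight (Suc k)"
    by (simp only: opY_nth Psi_nth mult.assoc)
  then show ?thesis
    by (simp add: schur_row_ttilde_nth_Suc[OF assms] del: of_nat_Suc)
qed

lemma opProd_opY_Psi_nth:
  assumes "r \<ge> 1"
  shows "opProd r (opY (Psi r)) $ k = - ((fps_X ^ (r - 1) * Psi r) $ k)"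
proof (cases "k < r - 1")
  case True
  then show ?thesis using assms by (simp add: opProd_nth opY_Psi_nth fps_X_power_mult_nth)
next
  case False
  then have "r \<le> Suc k" by arith
  have factors: "(\<Prod>j=1..r. 1 - hbar * of_nat k + hbar * of_nat (j - 1)) =
      (\<Prod>j=1..r. 1 - hbar * of_nat (Suc k - j))"
    using \<open>r \<le> Suc k\<close> by (intro prod.cong) (auto simp: of_nat_diff algebra_simps)
  have "opProd r (opY (Psi r)) $ k =
      - schur_row (\<lambda>k. ttilde r k / hbar) (Suc k - r) *
        (monotone_weight (Suc k) * (\<Prod>j=1..r. 1 - hbar * of_nat (Suc k - j)))"
    using False by (simp only: opProd_nth opY_Psi_nth[OF assms] factors if_False mult_ac)
  also have "\<dots> = - (Psi r $ (Suc k - r))"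
    by (simp only: monotone_weight_mult_prod[OF \<open>r \<le> Suc k\<close>] Psi_nth minus_mult_left)
  also have "Suc k - r = k - (r - 1)" using False assms by arith
  finally show ?thesis
    using False by (simp add: fps_X_power_mult_nth)
qed

theorem proposition6p2:
  fixes r :: nat
  assumes "r \<ge> 1"
  shows "opX ((opX ^^ (r - 1)) (Psi r) + opProd r (opY (Psi r))) = 0"
proof -
  have "fps_X ^ (r - 1) * Psi r + opProd r (opY (Psi r)) = 0"
    by (rule fps_ext) (simp add: opProd_opY_Psi_nth[OF assms])
  then show ?thesis
    by (simp add: opX_power opX_def)
qed

end
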